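(* Let $n\geq2$ and $\sigma>0$. For $b>0$ let $C^1_0([b,\infty))$ be the Banach space of $C^1$ functions $v:[b,\infty)\to\mathbb{R}$ with $v(x)\to0$ and $v'(x)\to0$ as $x\to+\infty$, with norm $\|v\|_{C^1}=\sup_{[b,\infty)}|v|+\sup_{[b,\infty)}|v'|$, and let $$Y_{\sigma,b}=\Big\{v\in C^1_0([b,\infty)) : v(x)>0,\ |v'(x)|<\frac{4(n-1)}{\sigma x^2}\ \text{for all }x\geq b\Big\}.$$ Define for $v\in Y_{\sigma,b}$ and $x\geq b$ $$[T_\sigma v](x)=2(n-1)x\int_x^\infty\frac{1}{t^2}\bigg\{\int_t^\infty\frac{1+(v'(s)+\sigma)^2}{v(s)+\sigma s}\,\frac{s}{2}\,e^{-\int_t^s\frac{z}{2}(1+(v'(z)+\sigma)^2)\,dz}\,ds\bigg\}dt.$$ Then there exists $b_0=b_0(n,\sigma)$ such that for every $b\geq b_0$, $T_\sigma$ is a contraction on $Y_{\sigma,b}$ for the norm $\|\cdot\|_{C^1}$, i.e. there is $\tau\in(0,1)$ with $\|T_\sigma v_2-T_\sigma v_1\|_{C^1}\leq\tau\|v_2-v_1\|_{C^1}$ for all $v_1,v_2\in Y_{\sigma,b}$. *)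

theory Defs
  imports "HOL-Analysis.Analysis"
begin

definition dv :: "real \<Rightarrow> (real \<Rightarrow> real) \<Rightarrow> real \<Rightarrow> real" where
  "dv b v x = vector_derivative v (at x within {b..})"

definition C1_0 :: "real \<Rightarrow> (real \<Rightarrow> real) \<Rightarrow> bool" where
  "C1_0 b v \<longleftrightarrow> (\<forall>x\<ge>b. v differentiable (at x within {b..}))
      \<and> continuous_on {b..} (dv b v)
      \<and> (v \<longlongrightarrow> 0) at_top \<and> (dv b v \<longlongrightarrow> 0) at_top"

definition c1norm :: "real \<Rightarrow> (real \<Rightarrow> real) \<Rightarrow> real" where
  "c1norm b v = (SUP x\<in>{b..}. \<bar>v x\<bar>) + (SUP x\<in>{b..}. \<bar>dv b v x\<bar>)"

definition Yset :: "nat \<Rightarrow> real \<Rightarrow> real \<Rightarrow> (real \<Rightarrow> real) set" where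
  "Yset n \<sigma> b = {v. C1_0 b v \<and> (\<forall>x\<ge>b. v x > 0 \<and>
       \<bar>dv b v x\<bar> < 4 * (real n - 1) / (\<sigma> * x\<^sup>2))}"

definition Top :: "nat \<Rightarrow> real \<Rightarrow> real \<Rightarrow> (real \<Rightarrow> real) \<Rightarrow> real \<Rightarrow> real" where
  "Top n \<sigma> b v x = 2 * (real n - 1) * x *
     integral {x..} (\<lambda>t. (1 / t\<^sup>2) *
       integral {t..} (\<lambda>s. (1 + (dv b v s + \<sigma>)\<^sup>2) / (v s + \<sigma> * s) * (s / 2) *
          exp (- integral {t..s} (\<lambda>z. z / 2 * (1 + (dv b v z + \<sigma>)\<^sup>2)))))"

end

theory Submission
  imports Defs "HOL-Real_Asymp.Real_Asymp"
begin

(*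
  Since z/2 * (1 + (v' z + \<sigma>)^2) \<ge> z/2, the exponential factor of the inner integrand is at
  most exp (-(s^2 - t^2)/4), and the weights s * exp (-(s^2 - t^2)/4) and
  s * (s^2 - t^2) * exp (-(s^2 - t^2)/4) have the explicit integrals 2 and 8 over [t, \<infinity>).
  Hence the inner integral H t is O(1/t), and it is Lipschitz in (v, v') for the sup norms with
  constant C/t. For the outer operator x \<mapsto> c x \<integral>_x^\<infinity> G with |G t| \<le> B/t^3, the value is
  O(B/x) and the derivative O(B/x^2). Applied to G t = H t / t^2, this makes T_\<sigma> Lipschitz in
  the C^1 norm with constant O(1/b), which is at most 1/2 once b is large.
*)

section \<open>Integrals over half-lines\<close>

lemma integrable_on_Ici_if_bounded:
  fixes f g :: "real \<Rightarrow> real"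
  assumes "continuous_on {t..} f" "g integrable_on {t..}" "\<And>x. x \<ge> t \<Longrightarrow> \<bar>f x\<bar> \<le> g x"
  shows "f integrable_on {t..}"
  by (rule measurable_bounded_by_integrable_imp_integrable[OF _ assms(2)])
     (use assms in \<open>auto intro!: continuous_imp_measurable_on_sets_lebesgue\<close>)

lemma has_integral_Ici_from_antiderivative:
  fixes f F :: "real \<Rightarrow> real"
  assumes "\<And>s. s \<ge> t \<Longrightarrow> (F has_real_derivative f s) (at s)"
    and "continuous_on {t..} f" and "\<And>s. s \<ge> t \<Longrightarrow> f s \<ge> 0"
    and "(F \<longlongrightarrow> F t + I) at_top"
  shows "(f has_integral I) {t..}"
proof (rule has_integral_to_inf)
  show "f integrable_on {t..y}" for y
    by (rule integrable_continuous_interval) (auto intro: continuous_on_subset[OF assms(2)])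
  have "(f has_integral F y - F t) {t..y}" if "y \<ge> t" for y
    using that assms(1) by (intro fundamental_theorem_of_calculus)
      (auto simp flip: has_real_derivative_iff_has_vector_derivative intro: has_field_derivative_at_within)
  then have "\<forall>\<^sub>F y in at_top. integral {t..y} f = F y - F t"
    unfolding eventually_at_top_linorder using integral_unique by blast
  moreover have "((\<lambda>y. F y - F t) \<longlongrightarrow> I) at_top"
    using tendsto_diff[OF assms(4) tendsto_const[of "F t"]] by simp
  ultimately show "((\<lambda>y. integral {t..y} f) \<longlongrightarrow> I) at_top"
    by (simp add: tendsto_cong)
qed (use assms(3) in auto)

lemma has_integral_gaussian_weight:
  fixes t :: real assumes "t \<ge> 0"
  shows "((\<lambda>s. s * exp (-(s^2-t^2)/4)) has_integral 2) {t..}"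
proof (rule has_integral_Ici_from_antiderivative)
  show "((\<lambda>s. -2 * exp (-(s^2-t^2)/4)) has_real_derivative s * exp (-(s^2-t^2)/4)) (at s)" for s
    by (rule derivative_eq_intros refl | simp)+
  show "((\<lambda>s::real. -2 * exp (-(s^2-t^2)/4)) \<longlongrightarrow> -2 * exp (-(t^2-t^2)/4) + 2) at_top"
    by simp real_asymp
qed (use assms in \<open>auto intro!: continuous_intros\<close>)

lemma has_integral_gaussian_weight_moment:
  fixes t :: real assumes "t \<ge> 0"
  shows "((\<lambda>s. s * (s^2-t^2) * exp (-(s^2-t^2)/4)) has_integral 8) {t..}"
proof (rule has_integral_Ici_from_antiderivative)
  show "((\<lambda>s. -(2*(s^2-t^2)+8) * exp (-(s^2-t^2)/4)) has_real_derivative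
      s * (s^2-t^2) * exp (-(s^2-t^2)/4)) (at s)" for s
    by (rule derivative_eq_intros refl | simp)+ (simp add: field_simps)
  show "((\<lambda>s::real. -(2*(s^2-t^2)+8) * exp (-(s^2-t^2)/4)) \<longlongrightarrow>
      -(2*(t^2-t^2)+8) * exp (-(t^2-t^2)/4) + 8) at_top"
    by simp real_asymp
  show "0 \<le> s * (s^2-t^2) * exp (-(s^2-t^2)/4)" if "t \<le> s" for s
    using that assms by (intro mult_nonneg_nonneg) (auto intro!: power_mono)
qed (auto intro!: continuous_intros)

lemma has_integral_half_identity:
  assumes "a \<le> c"
  shows "((\<lambda>z::real. z / 2) has_integral (c^2 - a^2)/4) {a..c}"
proof -
  have "((\<lambda>z::real. z / 2) has_integral (c^2/4 - a^2/4)) {a..c}"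
    using assms by (intro fundamental_theorem_of_calculus)
      (auto simp flip: has_real_derivative_iff_has_vector_derivative intro!: derivative_eq_intros)
  then show ?thesis by (simp add: diff_divide_distrib)
qed

lemma at_within_Ici_eq_at_within_Icc: "x \<ge> (b::real) \<Longrightarrow> at x within {b..} = at x within {b..x+1}"
  by (rule at_within_nhd[where S="{x-1<..<x+1}"]) auto

lemma at_within_Ici_neq_bot: "x \<ge> (b::real) \<Longrightarrow> at x within {b..} \<noteq> bot"
proof
  assume x: "x \<ge> b" and "at x within {b..} = bot"
  moreover have "at x within {x<..} \<le> at x within {b..}" using x by (intro at_le) auto
  ultimately show False by (simp add: bot_unique)
qed

lemma integral_Ici_split:
  fixes G :: "real \<Rightarrow> real"
  assumes "G integrable_on {b..}" "G integrable_on {x..}" "x \<ge> b"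
  shows "integral {x..} G = integral {b..} G - integral {b..x} G"
proof -
  have "G integrable_on {b..x}"
    by (rule integrable_on_subinterval[OF assms(1)]) auto
  moreover have "negligible ({b..x} \<inter> {x..})" by (rule negligible_subset[of "{x}"]) auto
  ultimately have "(G has_integral (integral {b..x} G + integral {x..} G)) ({b..x} \<union> {x..})"
    using assms(2) by (intro has_integral_Un integrable_integral)
  moreover have "{b..x} \<union> {x..} = {b..}" using assms(3) by auto
  ultimately show ?thesis by (metis integral_unique add_diff_cancel_left')
qed

lemma integral_from_has_real_derivative:
  fixes h :: "real \<Rightarrow> real"
  assumes "continuous_on {b..} h" "x \<ge> b"
  shows "((\<lambda>y. integral {b..y} h) has_real_derivative h x) (at x within {b..})"
proof -
  have "continuous_on {b..x+1} h" by (rule continuous_on_subset[OF assms(1)]) auto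
  then show ?thesis
    using integral_has_real_derivative[of b "x+1" h x] assms(2)
    by (simp add: at_within_Ici_eq_at_within_Icc)
qed

lemma continuous_on_integral_from:
  fixes h :: "real \<Rightarrow> real"
  assumes "continuous_on {b..} h"
  shows "continuous_on {b..} (\<lambda>x. integral {b..x} h)"
  using integral_from_has_real_derivative[OF assms]
  by (auto simp: continuous_on_eq_continuous_within intro: DERIV_continuous)

lemma bounded_on_Ici_if_tendsto_zero:
  fixes u :: "real \<Rightarrow> real"
  assumes "continuous_on {b..} u" "(u \<longlongrightarrow> 0) at_top"
  obtains B where "\<And>x. x \<ge> b \<Longrightarrow> \<bar>u x\<bar> \<le> B"
proof -
  obtain N where N: "\<And>x. x \<ge> N \<Longrightarrow> \<bar>u x\<bar> < 1"
    using order_tendstoD(2)[OF tendsto_rabs[OF assms(2)], of 1]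
    by (auto simp: eventually_at_top_linorder)
  have "compact (u ` {b..max b N})"
    by (rule compact_continuous_image) (auto intro: continuous_on_subset[OF assms(1)])
  then obtain B where B: "\<And>y. y \<in> u ` {b..max b N} \<Longrightarrow> norm y \<le> B"
    by (meson bounded_iff compact_imp_bounded)
  have "\<bar>u x\<bar> \<le> max B 1" if "x \<ge> b" for x
    using B[of "u x"] N[of x] that by (cases "x \<le> max b N") force+
  then show ?thesis by (rule that)
qed

lemma tail_integral:
  fixes G :: "real \<Rightarrow> real" and b B :: real
  assumes b: "b > 0" and G: "continuous_on {b..} G" and GB: "\<And>t. t \<ge> b \<Longrightarrow> \<bar>G t\<bar> \<le> B / t^3"
  shows tail_integrable: "\<And>x. x \<ge> b \<Longrightarrow> G integrable_on {x..}"
    and tail_integral_bound: "\<And>x. x \<ge> b \<Longrightarrow> \<bar>integral {x..} G\<bar> \<le> B / (2*x^2)"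
    and tail_integral_has_derivative:
      "\<And>x. x \<ge> b \<Longrightarrow> ((\<lambda>x. integral {x..} G) has_real_derivative (- G x)) (at x within {b..})"
    and continuous_on_tail_integral: "continuous_on {b..} (\<lambda>x. integral {x..} G)"
proof -
  have maj: "((\<lambda>t. B * (1 / t^3)) has_integral B * (1/(2*x^2))) {x..}" if "x \<ge> b" for x
    using has_integral_inverse_power_to_inf[of 3 x] that b
    by (intro has_integral_mult_right) (simp add: numeral_eq_Suc)
  show int: "G integrable_on {x..}" if "x \<ge> b" for x
    using maj[OF that] GB that
    by (intro integrable_on_Ici_if_bounded[of x G "\<lambda>t. B * (1 / t^3)"] continuous_on_subset[OF G])
       auto
  show "\<bar>integral {x..} G\<bar> \<le> B / (2*x^2)" if "x \<ge> b" for x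
  proof -
    have "norm (integral {x..} G) \<le> integral {x..} (\<lambda>t. B * (1 / t^3))"
      using int[OF that] maj[OF that] GB that by (intro integral_norm_bound_integral) auto
    also have "\<dots> = B / (2*x^2)" using maj[OF that] integral_unique by simp
    finally show ?thesis by simp
  qed
  show der: "((\<lambda>x. integral {x..} G) has_real_derivative (- G x)) (at x within {b..})"
    if "x \<ge> b" for x
  proof (rule has_field_derivative_transform_within[OF _ zero_less_one])
    show "((\<lambda>y. integral {b..} G - integral {b..y} G) has_real_derivative (- G x)) (at x within {b..})"
      using integral_from_has_real_derivative[OF G that] by (auto intro!: derivative_eq_intros)
    show "integral {b..} G - integral {b..y} G = integral {y..} G" if "y \<in> {b..}" for y
      using int[of b] int[of y] that b by (intro integral_Ici_split[symmetric]) auto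
  qed (use that in auto)
  then show "continuous_on {b..} (\<lambda>x. integral {x..} G)"
    by (auto simp: continuous_on_eq_continuous_within intro: DERIV_continuous)
qed

section \<open>The space \<open>C1_0\<close>\<close>

lemma dv_eq_if_has_vector_derivative:
  "x \<ge> b \<Longrightarrow> (f has_vector_derivative D) (at x within {b..}) \<Longrightarrow> dv b f x = D"
  unfolding dv_def by (rule vector_derivative_within[OF at_within_Ici_neq_bot])

lemma dv_cong:
  assumes "\<And>y. y \<ge> b \<Longrightarrow> f y = g y" "x \<ge> b"
  shows "dv b f x = dv b g x"
  unfolding dv_def using assms by (intro vector_derivative_cong_eq always_eventually) auto

lemma dv_diff:
  assumes "x \<ge> b" "u1 differentiable at x within {b..}" "u2 differentiable at x within {b..}"
  shows "dv b (\<lambda>x. u2 x - u1 x) x = dv b u2 x - dv b u1 x"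
  using assms unfolding dv_def[of b u1] dv_def[of b u2]
  by (intro dv_eq_if_has_vector_derivative has_vector_derivative_diff
        vector_derivative_works[THEN iffD1])

lemma C1_0_continuous_on: "C1_0 b u \<Longrightarrow> continuous_on {b..} u"
  unfolding C1_0_def
  by (auto simp: continuous_on_eq_continuous_within intro: differentiable_imp_continuous_within)

lemma C1_0_diff:
  assumes u1: "C1_0 b u1" and u2: "C1_0 b u2"
  shows "C1_0 b (\<lambda>x. u2 x - u1 x)"
proof -
  have dv: "dv b (\<lambda>x. u2 x - u1 x) x = dv b u2 x - dv b u1 x" if "x \<ge> b" for x
    using u1 u2 that by (intro dv_diff) (auto simp: C1_0_def)
  have "continuous_on {b..} (\<lambda>x. dv b u2 x - dv b u1 x)"
    using u1 u2 by (intro continuous_intros) (auto simp: C1_0_def)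
  moreover have "((\<lambda>x. dv b u2 x - dv b u1 x) \<longlongrightarrow> 0) at_top"
    using u1 u2 tendsto_diff[of "dv b u2" 0 at_top "dv b u1" 0] by (auto simp: C1_0_def)
  moreover have "eventually (\<lambda>x. dv b u2 x - dv b u1 x = dv b (\<lambda>x. u2 x - u1 x) x) at_top"
    unfolding eventually_at_top_linorder by (rule exI[of _ b]) (simp add: dv)
  ultimately show ?thesis
    using u1 u2 tendsto_diff[of u2 0 at_top u1 0] dv
    by (auto simp: C1_0_def intro: continuous_on_eq Lim_transform_eventually)
qed

lemma C1_0_abs_le_SUP:
  assumes u: "C1_0 b u" and x: "x \<ge> b"
  shows "\<bar>u x\<bar> \<le> (SUP y\<in>{b..}. \<bar>u y\<bar>)" and "\<bar>dv b u x\<bar> \<le> (SUP y\<in>{b..}. \<bar>dv b u y\<bar>)"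
proof -
  obtain B0 where "\<And>y. y \<ge> b \<Longrightarrow> \<bar>u y\<bar> \<le> B0"
    using bounded_on_Ici_if_tendsto_zero[OF C1_0_continuous_on[OF u]] u
    unfolding C1_0_def by blast
  then show "\<bar>u x\<bar> \<le> (SUP y\<in>{b..}. \<bar>u y\<bar>)"
    using x by (intro cSUP_upper bdd_aboveI2) auto
  obtain B1 where "\<And>y. y \<ge> b \<Longrightarrow> \<bar>dv b u y\<bar> \<le> B1"
    using bounded_on_Ici_if_tendsto_zero[of b "dv b u"] u unfolding C1_0_def by blast
  then show "\<bar>dv b u x\<bar> \<le> (SUP y\<in>{b..}. \<bar>dv b u y\<bar>)"
    using x by (intro cSUP_upper bdd_aboveI2) auto
qed

lemma c1norm_le:
  assumes "\<And>x. x \<ge> b \<Longrightarrow> \<bar>u x\<bar> \<le> A" "\<And>x. x \<ge> b \<Longrightarrow> \<bar>dv b u x\<bar> \<le> B"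
  shows "c1norm b u \<le> A + B"
  unfolding c1norm_def using assms by (intro add_mono cSUP_least) auto

section \<open>The outer operator\<close>

lemma scaled_tail_integral:
  fixes G :: "real \<Rightarrow> real" and b B c :: real
  assumes b: "b > 0" and G: "continuous_on {b..} G" and GB: "\<And>t. t \<ge> b \<Longrightarrow> \<bar>G t\<bar> \<le> B / t^3"
  defines "F \<equiv> \<lambda>x. c * x * integral {x..} G"
  shows scaled_tail_integral_bound: "\<And>x. x \<ge> b \<Longrightarrow> \<bar>F x\<bar> \<le> \<bar>c\<bar> * B / (2 * x)"
    and scaled_tail_integral_dv_bound: "\<And>x. x \<ge> b \<Longrightarrow> \<bar>dv b F x\<bar> \<le> \<bar>c\<bar> * (3 * B / 2) / x^2"
    and scaled_tail_integral_C1_0: "C1_0 b F"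
proof -
  have der: "(F has_vector_derivative c * (integral {x..} G - x * G x)) (at x within {b..})"
    if "x \<ge> b" for x
  proof -
    have "((\<lambda>x. c * x) has_real_derivative c) (at x within {b..})"
      by (auto intro!: derivative_eq_intros)
    from DERIV_mult[OF this tail_integral_has_derivative[OF b G GB that]]
    show ?thesis
      unfolding F_def has_real_derivative_iff_has_vector_derivative[symmetric]
      by (simp add: algebra_simps)
  qed
  have dv: "dv b F x = c * (integral {x..} G - x * G x)" if "x \<ge> b" for x
    by (rule dv_eq_if_has_vector_derivative[OF that der[OF that]])
  show bound: "\<bar>F x\<bar> \<le> \<bar>c\<bar> * B / (2 * x)" if x: "x \<ge> b" for x
  proof -
    have "\<bar>F x\<bar> = \<bar>c\<bar> * x * \<bar>integral {x..} G\<bar>"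
      using x b by (simp add: F_def abs_mult)
    also have "\<dots> \<le> \<bar>c\<bar> * x * (B / (2*x^2))"
      using tail_integral_bound[OF b G GB x] x b by (intro mult_left_mono) auto
    also have "\<dots> = \<bar>c\<bar> * B / (2 * x)" using x b by (simp add: power2_eq_square)
    finally show ?thesis .
  qed
  show dv_bound: "\<bar>dv b F x\<bar> \<le> \<bar>c\<bar> * (3 * B / 2) / x^2" if x: "x \<ge> b" for x
  proof -
    have "\<bar>x * G x\<bar> \<le> x * (B / x^3)"
      using mult_left_mono[OF GB[OF x], of x] x b by (simp add: abs_mult)
    also have "\<dots> = B / x^2" using x b by (simp add: power2_eq_square power3_eq_cube)
    finally have "\<bar>integral {x..} G - x * G x\<bar> \<le> B / (2*x^2) + B / x^2"
      using tail_integral_bound[OF b G GB x] by linarith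
    then have "\<bar>dv b F x\<bar> \<le> \<bar>c\<bar> * (B / (2*x^2) + B / x^2)"
      unfolding dv[OF x] abs_mult by (rule mult_left_mono) simp
    also have "\<dots> = \<bar>c\<bar> * (3 * B / 2) / x^2" by (simp add: field_simps)
    finally show ?thesis .
  qed
  show "C1_0 b F"
    unfolding C1_0_def
  proof (intro conjI allI impI)
    show "F differentiable at x within {b..}" if "b \<le> x" for x
      using der[OF that] by (rule differentiableI_vector)
    have "continuous_on {b..} (\<lambda>x. c * (integral {x..} G - x * G x))"
      by (intro continuous_intros continuous_on_tail_integral[OF b G GB] G)
    then show "continuous_on {b..} (dv b F)"
      by (rule continuous_on_eq) (use dv in auto)
    have "eventually (\<lambda>x. norm (F x) \<le> \<bar>c\<bar> * B / (2 * x)) at_top"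
      using bound by (auto simp: eventually_at_top_linorder)
    moreover have "((\<lambda>x. \<bar>c\<bar> * B / (2 * x)) \<longlongrightarrow> 0) at_top" by real_asymp
    ultimately show "(F \<longlongrightarrow> 0) at_top" by (rule Lim_null_comparison)
    have "eventually (\<lambda>x. norm (dv b F x) \<le> \<bar>c\<bar> * (3 * B / 2) / x^2) at_top"
      using dv_bound by (auto simp: eventually_at_top_linorder)
    moreover have "((\<lambda>x. \<bar>c\<bar> * (3 * B / 2) / x^2) \<longlongrightarrow> 0) at_top" by real_asymp
    ultimately show "(dv b F \<longlongrightarrow> 0) at_top" by (rule Lim_null_comparison)
  qed
qed

lemma scaled_tail_integral_diff:
  fixes G1 G2 :: "real \<Rightarrow> real" and b B1 B2 E c x :: real
  assumes b: "b > 0" and G1: "continuous_on {b..} G1" and G2: "continuous_on {b..} G2"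
    and B1: "\<And>t. t \<ge> b \<Longrightarrow> \<bar>G1 t\<bar> \<le> B1 / t^3" and B2: "\<And>t. t \<ge> b \<Longrightarrow> \<bar>G2 t\<bar> \<le> B2 / t^3"
    and E: "\<And>t. t \<ge> b \<Longrightarrow> \<bar>G2 t - G1 t\<bar> \<le> E / t^3" and x: "x \<ge> b"
  defines "F1 \<equiv> \<lambda>x. c * x * integral {x..} G1" and "F2 \<equiv> \<lambda>x. c * x * integral {x..} G2"
  shows "\<bar>F2 x - F1 x\<bar> \<le> \<bar>c\<bar> * E / (2 * x)"
    and "\<bar>dv b (\<lambda>x. F2 x - F1 x) x\<bar> \<le> \<bar>c\<bar> * (3 * E / 2) / x^2"
proof -
  have eq: "F2 y - F1 y = c * y * integral {y..} (\<lambda>t. G2 t - G1 t)" if "y \<ge> b" for y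
  proof -
    have "integral {y..} (\<lambda>t. G2 t - G1 t) = integral {y..} G2 - integral {y..} G1"
      by (rule integral_diff[OF tail_integrable[OF b G2 B2 that] tail_integrable[OF b G1 B1 that]])
    then show ?thesis by (simp add: F1_def F2_def right_diff_distrib)
  qed
  have G: "continuous_on {b..} (\<lambda>t. G2 t - G1 t)" by (intro continuous_intros G1 G2)
  show "\<bar>F2 x - F1 x\<bar> \<le> \<bar>c\<bar> * E / (2 * x)"
    using scaled_tail_integral_bound[OF b G E x] eq[OF x] by simp
  have "dv b (\<lambda>x. F2 x - F1 x) x = dv b (\<lambda>x. c * x * integral {x..} (\<lambda>t. G2 t - G1 t)) x"
    using eq x by (intro dv_cong) auto
  then show "\<bar>dv b (\<lambda>x. F2 x - F1 x) x\<bar> \<le> \<bar>c\<bar> * (3 * E / 2) / x^2"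
    using scaled_tail_integral_dv_bound[OF b G E x] by simp
qed

section \<open>The inner integral\<close>

text \<open>The argument \<open>w\<close> stands for \<open>v'\<close>; the estimates treat \<open>(v, w)\<close> as independent data.\<close>

definition Top_rate :: "real \<Rightarrow> (real \<Rightarrow> real) \<Rightarrow> real \<Rightarrow> real" where
  "Top_rate \<sigma> w z = z / 2 * (1 + (w z + \<sigma>)\<^sup>2)"

definition Top_source :: "real \<Rightarrow> (real \<Rightarrow> real) \<Rightarrow> (real \<Rightarrow> real) \<Rightarrow> real \<Rightarrow> real" where
  "Top_source \<sigma> v w s = (1 + (w s + \<sigma>)\<^sup>2) / (v s + \<sigma> * s) * (s / 2)"

definition Top_kernel ::
    "real \<Rightarrow> (real \<Rightarrow> real) \<Rightarrow> (real \<Rightarrow> real) \<Rightarrow> real \<Rightarrow> real \<Rightarrow> real" where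
  "Top_kernel \<sigma> v w t s = Top_source \<sigma> v w s * exp (- integral {t..s} (Top_rate \<sigma> w))"

definition Top_inner :: "real \<Rightarrow> (real \<Rightarrow> real) \<Rightarrow> (real \<Rightarrow> real) \<Rightarrow> real \<Rightarrow> real" where
  "Top_inner \<sigma> v w t = integral {t..} (Top_kernel \<sigma> v w t)"

lemma Top_eq_scaled_tail_integral:
  "Top n \<sigma> b v = (\<lambda>x. (2 * (real n - 1)) * x * integral {x..} (\<lambda>t. 1 / t\<^sup>2 * Top_inner \<sigma> v (dv b v) t))"
  unfolding Top_def Top_inner_def Top_kernel_def Top_source_def Top_rate_def[abs_def] by simp

locale Top_data =
  fixes \<sigma> b K :: real and v w :: "real \<Rightarrow> real"
  assumes sigma_pos: "\<sigma> > 0" and b_ge_1: "b \<ge> 1" and K_nonneg: "K \<ge> 0"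
    and continuous_v: "continuous_on {b..} v" and continuous_w: "continuous_on {b..} w"
    and v_pos: "\<And>x. x \<ge> b \<Longrightarrow> v x > 0"
    and abs_w_le: "\<And>x. x \<ge> b \<Longrightarrow> \<bar>w x\<bar> \<le> K / x\<^sup>2"
begin

definition "M = 1 + (K + \<sigma>)\<^sup>2"

lemma b_pos: "b > 0" using b_ge_1 by simp

lemma abs_w_shift_le: "x \<ge> b \<Longrightarrow> \<bar>w x + \<sigma>\<bar> \<le> K + \<sigma>"
proof -
  assume x: "x \<ge> b"
  have "x\<^sup>2 \<ge> 1" using x b_ge_1 by (simp add: one_le_power)
  then have "K / x\<^sup>2 \<le> K" using K_nonneg by (simp add: divide_le_eq mult_le_cancel_left1)
  with abs_w_le[OF x] sigma_pos show ?thesis by linarith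
qed

lemma w_shift_sq_le: "x \<ge> b \<Longrightarrow> (w x + \<sigma>)\<^sup>2 \<le> (K + \<sigma>)\<^sup>2"
  using abs_w_shift_le[of x] by (metis abs_ge_zero power2_abs power_mono)

lemma M_ge_1: "M \<ge> 1" unfolding M_def by simp

lemma continuous_on_rate: "continuous_on {b..} (Top_rate \<sigma> w)"
  unfolding Top_rate_def by (intro continuous_intros continuous_w) auto

lemma rate_integrable: "b \<le> t \<Longrightarrow> Top_rate \<sigma> w integrable_on {t..s}"
  by (rule integrable_continuous_interval) (auto intro: continuous_on_subset[OF continuous_on_rate])

lemma integral_rate_ge: "b \<le> t \<Longrightarrow> t \<le> s \<Longrightarrow> integral {t..s} (Top_rate \<sigma> w) \<ge> (s^2 - t^2)/4"
proof -
  assume t: "b \<le> t" "t \<le> s"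
  have "Top_rate \<sigma> w z \<ge> z / 2" if "z \<ge> b" for z
    unfolding Top_rate_def using that b_pos by (simp add: mult_le_cancel_left1)
  then have "integral {t..s} (\<lambda>z. z/2) \<le> integral {t..s} (Top_rate \<sigma> w)"
    using has_integral_half_identity[OF t(2)] rate_integrable[OF t(1)] t
    by (intro integral_le) auto
  then show ?thesis using has_integral_half_identity[OF t(2)] integral_unique by metis
qed

lemma exp_neg_integral_rate_le:
  "b \<le> t \<Longrightarrow> t \<le> s \<Longrightarrow> exp (- integral {t..s} (Top_rate \<sigma> w)) \<le> exp (-(s^2-t^2)/4)"
  using integral_rate_ge[of t s] by simp

lemma denominator_pos: "x \<ge> b \<Longrightarrow> v x + \<sigma> * x > 0"
  using v_pos[of x] sigma_pos b_pos by (simp add: add_pos_pos)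

lemma source_nonneg: "s \<ge> b \<Longrightarrow> Top_source \<sigma> v w s \<ge> 0"
  unfolding Top_source_def using denominator_pos[of s] b_pos by simp

lemma source_le: "s \<ge> b \<Longrightarrow> Top_source \<sigma> v w s \<le> M / (2*\<sigma>)"
proof -
  assume s: "s \<ge> b"
  have "Top_source \<sigma> v w s = (1 + (w s + \<sigma>)\<^sup>2) / (v s + \<sigma> * s) * (s / 2)"
    by (simp add: Top_source_def)
  also have "\<dots> \<le> M / (\<sigma> * s) * (s / 2)"
    using v_pos[OF s] sigma_pos s b_pos M_ge_1 w_shift_sq_le[OF s] unfolding M_def
    by (intro mult_right_mono frac_le) auto
  also have "\<dots> = M / (2*\<sigma>)" using s b_pos by (simp add: field_simps)
  finally show ?thesis .
qed

lemma continuous_on_source: "continuous_on {b..} (Top_source \<sigma> v w)"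
  unfolding Top_source_def using denominator_pos
  by (intro continuous_intros continuous_w continuous_v) (auto simp: less_imp_neq[symmetric])

text \<open>Factoring the kernel through \<open>rate_integral\<close> gives continuity of the inner integral in \<open>t\<close>.\<close>

definition "rate_integral s = integral {b..s} (Top_rate \<sigma> w)"
definition "kernel_factor s = Top_source \<sigma> v w s * exp (- rate_integral s)"

lemma kernel_eq:
  "b \<le> t \<Longrightarrow> t \<le> s \<Longrightarrow> Top_kernel \<sigma> v w t s = exp (rate_integral t) * kernel_factor s"
proof -
  assume t: "b \<le> t" "t \<le> s"
  have split: "integral {t..s} (Top_rate \<sigma> w) = rate_integral s - rate_integral t"
    using Henstock_Kurzweil_Integration.integral_combine[where a=b and c=t and b=s and f="Top_rate \<sigma> w"] rate_integrable[of b s] t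
    unfolding rate_integral_def by simp
  show ?thesis
    unfolding Top_kernel_def kernel_factor_def split by (simp add: exp_diff exp_minus field_simps)
qed

lemma continuous_on_kernel_factor: "continuous_on {b..} kernel_factor"
  unfolding kernel_factor_def[abs_def] rate_integral_def
  by (intro continuous_intros continuous_on_source continuous_on_integral_from continuous_on_rate)

lemma kernel_nonneg: "b \<le> t \<Longrightarrow> t \<le> s \<Longrightarrow> Top_kernel \<sigma> v w t s \<ge> 0"
  unfolding Top_kernel_def using source_nonneg[of s] by simp

lemma kernel_le:
  "b \<le> t \<Longrightarrow> t \<le> s \<Longrightarrow> Top_kernel \<sigma> v w t s \<le> M / (2*\<sigma>*t) * (s * exp (-(s^2-t^2)/4))"
proof -
  assume t: "b \<le> t" "t \<le> s"
  have "Top_kernel \<sigma> v w t s \<le> M / (2*\<sigma>) * exp (-(s^2-t^2)/4)"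
    unfolding Top_kernel_def using source_le[of s] source_nonneg[of s] exp_neg_integral_rate_le[OF t] t
    by (intro mult_mono) auto
  also have "\<dots> \<le> M / (2*\<sigma>) * ((s/t) * exp (-(s^2-t^2)/4))"
  proof -
    have "1 \<le> s/t" using t b_pos by simp
    then have "exp (-(s^2-t^2)/4) \<le> (s/t) * exp (-(s^2-t^2)/4)"
      using mult_right_mono[of 1 "s/t" "exp (-(s^2-t^2)/4)"] by simp
    then show ?thesis using M_ge_1 sigma_pos by (intro mult_left_mono) auto
  qed
  finally show ?thesis by simp
qed

lemma has_integral_kernel_majorant:
  "t \<ge> b \<Longrightarrow> ((\<lambda>s. M / (2*\<sigma>*t) * (s * exp (-(s^2-t^2)/4))) has_integral M / (\<sigma>*t)) {t..}"
  using has_integral_mult_right[OF has_integral_gaussian_weight[of t], of "M / (2*\<sigma>*t)"] b_pos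
  by simp

lemma kernel_integrable: "t \<ge> b \<Longrightarrow> Top_kernel \<sigma> v w t integrable_on {t..}"
proof -
  assume t: "t \<ge> b"
  have "continuous_on {t..} (\<lambda>s. exp (rate_integral t) * kernel_factor s)"
    by (intro continuous_intros continuous_on_subset[OF continuous_on_kernel_factor]) (use t in auto)
  moreover have "exp (rate_integral t) * kernel_factor s = Top_kernel \<sigma> v w t s" if "s \<in> {t..}" for s
    using kernel_eq[OF t] that by simp
  ultimately have "continuous_on {t..} (Top_kernel \<sigma> v w t)"
    by (rule continuous_on_eq)
  moreover have "\<bar>Top_kernel \<sigma> v w t s\<bar> \<le> M / (2*\<sigma>*t) * (s * exp (-(s^2-t^2)/4))" if "s \<ge> t" for s
    using kernel_le[OF t that] kernel_nonneg[OF t that] by simp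
  ultimately show ?thesis
    by (rule integrable_on_Ici_if_bounded[OF _ has_integral_integrable[OF has_integral_kernel_majorant[OF t]]])
qed

lemma inner_nonneg: "t \<ge> b \<Longrightarrow> Top_inner \<sigma> v w t \<ge> 0"
  unfolding Top_inner_def by (rule integral_nonneg[OF kernel_integrable]) (auto intro: kernel_nonneg)

lemma inner_le: "t \<ge> b \<Longrightarrow> Top_inner \<sigma> v w t \<le> M / (\<sigma>*t)"
proof -
  assume t: "t \<ge> b"
  have "Top_inner \<sigma> v w t \<le> integral {t..} (\<lambda>s. M / (2*\<sigma>*t) * (s * exp (-(s^2-t^2)/4)))"
    unfolding Top_inner_def
    by (rule integral_le[OF kernel_integrable]) (use t has_integral_kernel_majorant kernel_le in auto)
  then show ?thesis using has_integral_kernel_majorant[OF t] integral_unique by metis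
qed

lemma continuous_on_inner: "continuous_on {b..} (Top_inner \<sigma> v w)"
proof -
  have kernel_factor_integrable: "kernel_factor integrable_on {t..}" if "t \<ge> b" for t
  proof -
    have "(\<lambda>s. exp (- rate_integral t) * Top_kernel \<sigma> v w t s) integrable_on {t..}"
      by (intro integrable_on_mult_right kernel_integrable that)
    then show ?thesis
      by (rule iffD1[OF integrable_cong, rotated]) (use that in \<open>auto simp: kernel_eq exp_minus\<close>)
  qed
  have inner_eq: "Top_inner \<sigma> v w t =
      exp (rate_integral t) * (integral {b..} kernel_factor - integral {b..t} kernel_factor)"
    if "t \<ge> b" for t
  proof -
    have "Top_inner \<sigma> v w t = integral {t..} (\<lambda>s. exp (rate_integral t) * kernel_factor s)"
      unfolding Top_inner_def by (rule integral_cong) (use that kernel_eq in auto)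
    then show ?thesis
      using integral_Ici_split[OF kernel_factor_integrable[OF order_refl]
          kernel_factor_integrable[OF that] that]
      by simp
  qed
  have "continuous_on {b..}
      (\<lambda>t. exp (rate_integral t) * (integral {b..} kernel_factor - integral {b..t} kernel_factor))"
    unfolding rate_integral_def
    by (intro continuous_intros continuous_on_integral_from continuous_on_rate continuous_on_kernel_factor)
  then show ?thesis by (rule continuous_on_eq) (simp add: inner_eq)
qed

lemma continuous_on_weighted_inner: "continuous_on {b..} (\<lambda>t. 1 / t\<^sup>2 * Top_inner \<sigma> v w t)"
  by (intro continuous_intros continuous_on_inner) (use b_pos in auto)

lemma weighted_inner_bound: "t \<ge> b \<Longrightarrow> \<bar>1 / t\<^sup>2 * Top_inner \<sigma> v w t\<bar> \<le> (M/\<sigma>) / t^3"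
proof -
  assume t: "t \<ge> b"
  have "\<bar>1 / t\<^sup>2 * Top_inner \<sigma> v w t\<bar> = 1 / t\<^sup>2 * Top_inner \<sigma> v w t"
    using inner_nonneg[OF t] by simp
  also have "\<dots> \<le> 1 / t\<^sup>2 * (M / (\<sigma>*t))"
    using inner_le[OF t] by (intro mult_left_mono) auto
  also have "\<dots> = (M/\<sigma>) / t^3" by (simp add: power2_eq_square power3_eq_cube)
  finally show ?thesis .
qed

end

section \<open>Lipschitz estimates\<close>

lemma abs_exp_neg_diff_le:
  fixes a d c :: real
  assumes "c \<le> a" "c \<le> d"
  shows "\<bar>exp (-a) - exp (-d)\<bar> \<le> \<bar>a - d\<bar> * exp (-c)"
proof -
  have ordered: "\<bar>exp (-a) - exp (-d)\<bar> \<le> \<bar>a - d\<bar> * exp (-c)" if "c \<le> a" "a \<le> d" for a d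
  proof -
    have "exp (-d) = exp (-a) * exp (-(d-a))" by (simp flip: exp_add)
    moreover have "1 - exp (-(d-a)) \<le> d - a" using exp_ge_add_one_self[of "-(d-a)"] by linarith
    moreover have "exp (-(d-a)) \<le> 1" using that by simp
    ultimately have "\<bar>exp (-a) - exp (-d)\<bar> = exp (-a) * (1 - exp (-(d-a)))"
      by (simp add: algebra_simps)
    also have "\<dots> \<le> exp (-a) * (d - a)"
      using \<open>1 - exp (-(d-a)) \<le> d - a\<close> by (intro mult_left_mono) auto
    also have "\<dots> \<le> exp (-c) * (d - a)" using that by (intro mult_right_mono) auto
    finally show ?thesis using that by (simp add: mult.commute)
  qed
  show ?thesis
    using ordered[of a d] ordered[of d a] assms by (cases "a \<le> d") (auto simp: abs_minus_commute)
qed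

lemma abs_power2_diff_le:
  fixes p q L :: real
  assumes "\<bar>p\<bar> \<le> L" "\<bar>q\<bar> \<le> L"
  shows "\<bar>p\<^sup>2 - q\<^sup>2\<bar> \<le> 2 * L * \<bar>p - q\<bar>"
proof -
  have "\<bar>p\<^sup>2 - q\<^sup>2\<bar> = \<bar>p - q\<bar> * \<bar>p + q\<bar>"
    by (simp add: power2_eq_square algebra_simps flip: abs_mult)
  also have "\<dots> \<le> \<bar>p - q\<bar> * (2 * L)" using assms by (intro mult_left_mono) auto
  finally show ?thesis by (simp add: algebra_simps)
qed

locale Top_pair = d1: Top_data \<sigma> b K v1 w1 + d2: Top_data \<sigma> b K v2 w2
  for \<sigma> b K :: real and v1 w1 v2 w2 :: "real \<Rightarrow> real" +
  fixes D0 D1 :: real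
  assumes v_diff_le: "\<And>s. s \<ge> b \<Longrightarrow> \<bar>v2 s - v1 s\<bar> \<le> D0"
    and w_diff_le: "\<And>s. s \<ge> b \<Longrightarrow> \<bar>w2 s - w1 s\<bar> \<le> D1"
begin

lemma D0_nonneg: "D0 \<ge> 0" using v_diff_le[of b] by linarith

lemma D1_nonneg: "D1 \<ge> 0" using w_diff_le[of b] by linarith

lemma w_shift_sq_diff_le: "s \<ge> b \<Longrightarrow> \<bar>(w2 s + \<sigma>)\<^sup>2 - (w1 s + \<sigma>)\<^sup>2\<bar> \<le> 2 * (K + \<sigma>) * D1"
proof -
  assume s: "s \<ge> b"
  have "\<bar>(w2 s + \<sigma>)\<^sup>2 - (w1 s + \<sigma>)\<^sup>2\<bar> \<le> 2 * (K + \<sigma>) * \<bar>w2 s - w1 s\<bar>"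
    using abs_power2_diff_le[OF d2.abs_w_shift_le[OF s] d1.abs_w_shift_le[OF s]] by simp
  also have "\<dots> \<le> 2 * (K + \<sigma>) * D1"
    using w_diff_le[OF s] d1.K_nonneg d1.sigma_pos by (intro mult_left_mono) auto
  finally show ?thesis .
qed

lemma source_diff_le:
  assumes s: "s \<ge> b"
  shows "\<bar>Top_source \<sigma> v2 w2 s - Top_source \<sigma> v1 w1 s\<bar>
    \<le> (K + \<sigma>) * D1 / \<sigma> + d1.M * D0 / (2 * \<sigma>\<^sup>2)"
proof -
  define a1 a2 c1 c2 where "a1 = 1 + (w1 s + \<sigma>)\<^sup>2" and "a2 = 1 + (w2 s + \<sigma>)\<^sup>2"
    and "c1 = v1 s + \<sigma> * s" and "c2 = v2 s + \<sigma> * s"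
  have s_pos: "s > 0" "s \<ge> 1" using s d1.b_ge_1 by auto
  have c1: "c1 \<ge> \<sigma> * s" "c1 > 0" using d1.denominator_pos[OF s] d1.v_pos[OF s] unfolding c1_def by auto
  have c2: "c2 \<ge> \<sigma> * s" "c2 > 0" using d2.denominator_pos[OF s] d2.v_pos[OF s] unfolding c2_def by auto
  have a1: "0 \<le> a1" "a1 \<le> d1.M" using d1.w_shift_sq_le[OF s] unfolding a1_def d1.M_def by auto
  have "Top_source \<sigma> v2 w2 s - Top_source \<sigma> v1 w1 s
      = (s/2) * ((a2 - a1) / c2) + (s/2) * (a1 * (c1 - c2) / (c1 * c2))"
    unfolding Top_source_def a1_def[symmetric] a2_def[symmetric] c1_def[symmetric] c2_def[symmetric]
    using c1 c2 by (simp add: field_simps)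
  then have "\<bar>Top_source \<sigma> v2 w2 s - Top_source \<sigma> v1 w1 s\<bar>
      \<le> \<bar>(s/2) * ((a2 - a1) / c2)\<bar> + \<bar>(s/2) * (a1 * (c1 - c2) / (c1 * c2))\<bar>"
    by (simp only: abs_triangle_ineq)
  moreover have "\<bar>(s/2) * ((a2 - a1) / c2)\<bar> \<le> (K + \<sigma>) * D1 / \<sigma>"
  proof -
    have "\<bar>(s/2) * ((a2 - a1) / c2)\<bar> = (s/2) * \<bar>a2 - a1\<bar> / c2" using s_pos c2 by (simp add: abs_mult)
    also have "\<dots> \<le> (s/2) * (2 * (K + \<sigma>) * D1) / (\<sigma> * s)"
      using s_pos c2 w_shift_sq_diff_le[OF s] d1.sigma_pos
      unfolding a1_def a2_def by (intro frac_le mult_left_mono) auto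
    also have "\<dots> = (K + \<sigma>) * D1 / \<sigma>" using s_pos d1.sigma_pos by (simp add: field_simps)
    finally show ?thesis .
  qed
  moreover have "\<bar>(s/2) * (a1 * (c1 - c2) / (c1 * c2))\<bar> \<le> d1.M * D0 / (2 * \<sigma>\<^sup>2)"
  proof -
    have cc: "c1 * c2 \<ge> (\<sigma> * s) * (\<sigma> * s)" using c1 c2 d1.sigma_pos s_pos by (intro mult_mono) auto
    have dc: "\<bar>c1 - c2\<bar> \<le> D0" unfolding c1_def c2_def using v_diff_le[OF s] by simp
    have "\<bar>(s/2) * (a1 * (c1 - c2) / (c1 * c2))\<bar> = (s/2) * (a1 * \<bar>c1 - c2\<bar>) / (c1 * c2)"
      using s_pos c1 c2 a1 by (simp add: abs_mult)
    also have "\<dots> \<le> (s/2) * (d1.M * D0) / ((\<sigma> * s) * (\<sigma> * s))"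
      using s_pos c1 c2 a1 dc cc d1.sigma_pos by (intro frac_le mult_left_mono mult_mono) auto
    also have "\<dots> = d1.M * D0 / (2 * \<sigma>\<^sup>2) / s"
      using s_pos d1.sigma_pos by (simp add: field_simps power2_eq_square)
    also have "\<dots> \<le> d1.M * D0 / (2 * \<sigma>\<^sup>2)"
    proof -
      have "0 \<le> d1.M * D0 / (2 * \<sigma>\<^sup>2)" using d1.M_ge_1 D0_nonneg by simp
      then show ?thesis using s_pos divide_left_mono[of 1 s "d1.M * D0 / (2 * \<sigma>\<^sup>2)"] by simp
    qed
    finally show ?thesis .
  qed
  ultimately show ?thesis by linarith
qed

lemma integral_rate_diff_le:
  assumes t: "b \<le> t" "t \<le> s"
  shows "\<bar>integral {t..s} (Top_rate \<sigma> w2) - integral {t..s} (Top_rate \<sigma> w1)\<bar>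
    \<le> (K + \<sigma>) * D1 * (s^2 - t^2) / 2"
proof -
  have "\<bar>integral {t..s} (Top_rate \<sigma> w2) - integral {t..s} (Top_rate \<sigma> w1)\<bar>
      = norm (integral {t..s} (\<lambda>z. Top_rate \<sigma> w2 z - Top_rate \<sigma> w1 z))"
    using integral_diff[OF d2.rate_integrable[OF t(1)] d1.rate_integrable[OF t(1)]] by simp
  also have "\<dots> \<le> integral {t..s} (\<lambda>z. (2 * (K + \<sigma>) * D1) * (z / 2))"
  proof (rule integral_norm_bound_integral)
    show "(\<lambda>z. Top_rate \<sigma> w2 z - Top_rate \<sigma> w1 z) integrable_on {t..s}"
      by (intro integrable_diff d2.rate_integrable d1.rate_integrable t)
    show "(\<lambda>z. 2 * (K + \<sigma>) * D1 * (z / 2)) integrable_on {t..s}"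
      by (intro integrable_continuous_interval continuous_intros) auto
    fix z assume "z \<in> {t..s}"
    then have z: "z \<ge> b" "z > 0" using t d1.b_pos by auto
    have rate_diff: "Top_rate \<sigma> w2 z - Top_rate \<sigma> w1 z = (z/2) * ((w2 z + \<sigma>)\<^sup>2 - (w1 z + \<sigma>)\<^sup>2)"
      unfolding Top_rate_def by (simp add: algebra_simps)
    have "norm (Top_rate \<sigma> w2 z - Top_rate \<sigma> w1 z) = (z/2) * \<bar>(w2 z + \<sigma>)\<^sup>2 - (w1 z + \<sigma>)\<^sup>2\<bar>"
      unfolding real_norm_def rate_diff abs_mult using z by simp
    also have "\<dots> \<le> (z/2) * (2 * (K + \<sigma>) * D1)"
      using w_shift_sq_diff_le[OF z(1)] z by (intro mult_left_mono) auto
    finally show "norm (Top_rate \<sigma> w2 z - Top_rate \<sigma> w1 z) \<le> 2 * (K + \<sigma>) * D1 * (z / 2)"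
      by (simp add: algebra_simps)
  qed
  also have "\<dots> = (2 * (K + \<sigma>) * D1) * ((s^2 - t^2)/4)"
    by (rule integral_unique[OF has_integral_mult_right[OF has_integral_half_identity[OF t(2)]]])
  also have "\<dots> = (K + \<sigma>) * D1 * (s^2 - t^2) / 2" by (simp add: field_simps)
  finally show ?thesis .
qed

text \<open>
  The difference of sources is paired with the first Gaussian weight, the difference of the
  exponential factors (Lipschitz in the exponent, which differs by \<open>O(s^2 - t^2)\<close>) with the second.
\<close>

lemma kernel_diff_le:
  assumes t: "b \<le> t" "t \<le> s"
  defines "e \<equiv> exp (-(s^2-t^2)/4)"
  shows "\<bar>Top_kernel \<sigma> v2 w2 t s - Top_kernel \<sigma> v1 w1 t s\<bar> \<le>
    (((K + \<sigma>) * D1 / \<sigma> + d1.M * D0 / (2 * \<sigma>\<^sup>2)) * (s * e)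
     + (d1.M * (K + \<sigma>) * D1 / (4 * \<sigma>)) * (s * (s^2-t^2) * e)) / t"
proof -
  define A where "A = (K + \<sigma>) * D1 / \<sigma> + d1.M * D0 / (2 * \<sigma>\<^sup>2)"
  define B where "B = d1.M * (K + \<sigma>) * D1 / (4 * \<sigma>)"
  define u where "u = s^2 - t^2"
  define f1 f2 where "f1 = Top_source \<sigma> v1 w1 s" and "f2 = Top_source \<sigma> v2 w2 s"
  define I1 I2 where "I1 = integral {t..s} (Top_rate \<sigma> w1)" and "I2 = integral {t..s} (Top_rate \<sigma> w2)"
  have s: "s \<ge> b" and t_pos: "t > 0" using t d1.b_pos by auto
  have u_nonneg: "u \<ge> 0" unfolding u_def using t t_pos by (simp add: power_mono)
  have A_nonneg: "A \<ge> 0" and B_nonneg: "B \<ge> 0"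
    unfolding A_def B_def using D0_nonneg D1_nonneg d1.K_nonneg d1.sigma_pos d1.M_ge_1 by auto
  have e_pos: "e > 0" unfolding e_def by simp
  have f1: "0 \<le> f1" "f1 \<le> d1.M / (2*\<sigma>)"
    unfolding f1_def using d1.source_nonneg[OF s] d1.source_le[OF s] by auto
  have E2: "0 \<le> exp (-I2)" "exp (-I2) \<le> e"
    unfolding I2_def e_def using d2.exp_neg_integral_rate_le[OF t] by auto
  have "\<bar>exp (-I2) - exp (-I1)\<bar> \<le> \<bar>I2 - I1\<bar> * exp (-(u/4))"
    unfolding I1_def I2_def u_def
    by (rule abs_exp_neg_diff_le[OF d2.integral_rate_ge[OF t] d1.integral_rate_ge[OF t]])
  also have "\<dots> = \<bar>I2 - I1\<bar> * e" unfolding e_def u_def by (simp add: minus_divide_left)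
  also have "\<dots> \<le> ((K + \<sigma>) * D1 * u / 2) * e"
    using integral_rate_diff_le[OF t] e_pos unfolding I1_def I2_def u_def by (intro mult_right_mono) auto
  finally have E_diff: "\<bar>exp (-I2) - exp (-I1)\<bar> \<le> ((K + \<sigma>) * D1 * u / 2) * e" .
  have "Top_kernel \<sigma> v2 w2 t s - Top_kernel \<sigma> v1 w1 t s = (f2 - f1) * exp (-I2) + f1 * (exp (-I2) - exp (-I1))"
    unfolding Top_kernel_def f1_def f2_def I1_def I2_def by (simp add: algebra_simps)
  then have "\<bar>Top_kernel \<sigma> v2 w2 t s - Top_kernel \<sigma> v1 w1 t s\<bar>
      \<le> \<bar>f2 - f1\<bar> * exp (-I2) + f1 * \<bar>exp (-I2) - exp (-I1)\<bar>"
    using f1 E2 by (simp add: abs_mult abs_triangle_ineq[THEN order_trans])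
  also have "\<dots> \<le> A * e + (d1.M / (2*\<sigma>)) * (((K + \<sigma>) * D1 * u / 2) * e)"
    using source_diff_le[OF s] E2 f1 E_diff A_nonneg unfolding A_def f1_def f2_def
    by (intro add_mono mult_mono) auto
  also have "\<dots> = A * e + B * u * e" unfolding B_def by (simp add: field_simps)
  also have "\<dots> \<le> (s/t) * (A * e + B * u * e)"
  proof -
    have "1 \<le> s/t" using t t_pos by simp
    moreover have "A * e + B * u * e \<ge> 0" using A_nonneg B_nonneg u_nonneg e_pos by simp
    ultimately show ?thesis using mult_right_mono[of 1 "s/t" "A * e + B * u * e"] by simp
  qed
  also have "\<dots> = (A * (s * e) + B * (s * u * e)) / t" by (simp add: field_simps)
  finally show ?thesis unfolding A_def B_def u_def .
qed

end

definition Top_lipschitz_const :: "real \<Rightarrow> real \<Rightarrow> real" where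
  "Top_lipschitz_const K \<sigma> =
     2 * (K + \<sigma>) / \<sigma> + (1 + (K + \<sigma>)\<^sup>2) / \<sigma>\<^sup>2 + 2 * (1 + (K + \<sigma>)\<^sup>2) * (K + \<sigma>) / \<sigma>"

lemma Top_lipschitz_const_nonneg: "K \<ge> 0 \<Longrightarrow> \<sigma> > 0 \<Longrightarrow> Top_lipschitz_const K \<sigma> \<ge> 0"
  unfolding Top_lipschitz_const_def by (intro add_nonneg_nonneg divide_nonneg_pos mult_nonneg_nonneg) auto

context Top_pair
begin

lemma inner_diff_le:
  assumes t: "b \<le> t"
  shows "\<bar>Top_inner \<sigma> v2 w2 t - Top_inner \<sigma> v1 w1 t\<bar> \<le> Top_lipschitz_const K \<sigma> * (D0 + D1) / t"
proof -
  define A where "A = (K + \<sigma>) * D1 / \<sigma> + d1.M * D0 / (2 * \<sigma>\<^sup>2)"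
  define B where "B = d1.M * (K + \<sigma>) * D1 / (4 * \<sigma>)"
  define h where "h = (\<lambda>s. (A * (s * exp (-(s^2-t^2)/4)) + B * (s * (s^2-t^2) * exp (-(s^2-t^2)/4))) / t)"
  have t_pos: "t > 0" using t d1.b_pos by simp
  have h: "(h has_integral (A * 2 + B * 8) / t) {t..}"
    unfolding h_def using t_pos
    by (intro has_integral_divide has_integral_add has_integral_mult_right
        has_integral_gaussian_weight has_integral_gaussian_weight_moment) auto
  have "\<bar>Top_inner \<sigma> v2 w2 t - Top_inner \<sigma> v1 w1 t\<bar>
      = norm (integral {t..} (\<lambda>s. Top_kernel \<sigma> v2 w2 t s - Top_kernel \<sigma> v1 w1 t s))"
    unfolding Top_inner_def using integral_diff[OF d2.kernel_integrable[OF t] d1.kernel_integrable[OF t]]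
    by simp
  also have "\<dots> \<le> integral {t..} h"
    using integrable_diff[OF d2.kernel_integrable[OF t] d1.kernel_integrable[OF t]] h kernel_diff_le t
    unfolding h_def A_def B_def by (intro integral_norm_bound_integral) auto
  also have "\<dots> = (A * 2 + B * 8) / t" using h by (rule integral_unique)
  also have "\<dots> \<le> Top_lipschitz_const K \<sigma> * (D0 + D1) / t"
  proof (rule divide_right_mono[OF _ less_imp_le[OF t_pos]])
    define \<alpha> \<beta> where "\<alpha> = 2 * (K + \<sigma>) / \<sigma> + 2 * d1.M * (K + \<sigma>) / \<sigma>" and "\<beta> = d1.M / \<sigma>\<^sup>2"
    have "\<alpha> \<ge> 0" "\<beta> \<ge> 0" unfolding \<alpha>_def \<beta>_def using d1.sigma_pos d1.K_nonneg d1.M_ge_1 by auto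
    then have "\<alpha> * D1 + \<beta> * D0 \<le> (\<alpha> + \<beta>) * (D0 + D1)"
      using D0_nonneg D1_nonneg by (simp add: algebra_simps)
    moreover have "A * 2 + B * 8 = \<alpha> * D1 + \<beta> * D0"
      unfolding A_def B_def \<alpha>_def \<beta>_def using d1.sigma_pos by (simp add: field_simps power2_eq_square)
    moreover have "\<alpha> + \<beta> = Top_lipschitz_const K \<sigma>"
      unfolding \<alpha>_def \<beta>_def Top_lipschitz_const_def d1.M_def by (simp add: algebra_simps)
    ultimately show "A * 2 + B * 8 \<le> Top_lipschitz_const K \<sigma> * (D0 + D1)" by simp
  qed
  finally show ?thesis .
qed

lemma weighted_inner_diff_le:
  assumes t: "b \<le> t"
  shows "\<bar>1 / t\<^sup>2 * Top_inner \<sigma> v2 w2 t - 1 / t\<^sup>2 * Top_inner \<sigma> v1 w1 t\<bar>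
    \<le> Top_lipschitz_const K \<sigma> * (D0 + D1) / t^3"
proof -
  have "\<bar>1 / t\<^sup>2 * Top_inner \<sigma> v2 w2 t - 1 / t\<^sup>2 * Top_inner \<sigma> v1 w1 t\<bar>
      = 1 / t\<^sup>2 * \<bar>Top_inner \<sigma> v2 w2 t - Top_inner \<sigma> v1 w1 t\<bar>"
    by (simp add: abs_mult flip: right_diff_distrib diff_divide_distrib)
  also have "\<dots> \<le> 1 / t\<^sup>2 * (Top_lipschitz_const K \<sigma> * (D0 + D1) / t)"
    using inner_diff_le[OF t] by (intro mult_left_mono) auto
  also have "\<dots> = Top_lipschitz_const K \<sigma> * (D0 + D1) / t^3"
    by (simp add: power2_eq_square power3_eq_cube)
  finally show ?thesis .
qed

end

section \<open>The operator on \<open>Yset\<close>\<close>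

lemma Yset_Top_data:
  assumes v: "v \<in> Yset n \<sigma> b" and n: "n \<ge> 2" and \<sigma>: "\<sigma> > 0" and b: "b \<ge> 1"
  shows "Top_data \<sigma> b (4 * (real n - 1) / \<sigma>) v (dv b v)"
proof
  from v have C: "C1_0 b v"
    and Y: "\<And>x. x \<ge> b \<Longrightarrow> v x > 0 \<and> \<bar>dv b v x\<bar> < 4 * (real n - 1) / (\<sigma> * x\<^sup>2)"
    unfolding Yset_def by auto
  show "continuous_on {b..} v" by (rule C1_0_continuous_on[OF C])
  show "continuous_on {b..} (dv b v)" using C unfolding C1_0_def by auto
  show "\<bar>dv b v x\<bar> \<le> 4 * (real n - 1) / \<sigma> / x\<^sup>2" if "b \<le> x" for x
    using Y[OF that] by (simp add: field_simps)
qed (use v n \<sigma> b in \<open>auto simp: Yset_def\<close>)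

lemma Top_C1_0:
  assumes "v \<in> Yset n \<sigma> b" "n \<ge> 2" "\<sigma> > 0" "b \<ge> 1"
  shows "C1_0 b (Top n \<sigma> b v)"
proof -
  interpret Top_data \<sigma> b "4 * (real n - 1) / \<sigma>" v "dv b v"
    by (rule Yset_Top_data[OF assms])
  show ?thesis
    unfolding Top_eq_scaled_tail_integral
    by (rule scaled_tail_integral_C1_0[OF b_pos continuous_on_weighted_inner weighted_inner_bound])
qed

lemma Top_contraction:
  assumes n: "n \<ge> 2" and \<sigma>: "\<sigma> > 0" and b: "b \<ge> 1"
    and b_large: "8 * (real n - 1) * Top_lipschitz_const (4 * (real n - 1) / \<sigma>) \<sigma> \<le> b"
    and v1: "v1 \<in> Yset n \<sigma> b" and v2: "v2 \<in> Yset n \<sigma> b"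
  shows "c1norm b (\<lambda>x. Top n \<sigma> b v2 x - Top n \<sigma> b v1 x) \<le> 1/2 * c1norm b (\<lambda>x. v2 x - v1 x)"
proof -
  define K C c where "K = 4 * (real n - 1) / \<sigma>" and "C = Top_lipschitz_const K \<sigma>"
    and "c = 2 * (real n - 1)"
  define u where "u = (\<lambda>x. v2 x - v1 x)"
  define D0 D1 where "D0 = (SUP x\<in>{b..}. \<bar>u x\<bar>)" and "D1 = (SUP x\<in>{b..}. \<bar>dv b u x\<bar>)"
  have C1: "C1_0 b v1" "C1_0 b v2" using v1 v2 by (auto simp: Yset_def)
  have u: "C1_0 b u" unfolding u_def by (rule C1_0_diff[OF C1])
  have dv_u: "dv b u s = dv b v2 s - dv b v1 s" if "s \<ge> b" for s
    unfolding u_def using C1 that by (intro dv_diff) (auto simp: C1_0_def)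
  interpret Top_pair \<sigma> b K v1 "dv b v1" v2 "dv b v2" D0 D1
    using Yset_Top_data[OF v1 n \<sigma> b] Yset_Top_data[OF v2 n \<sigma> b]
      C1_0_abs_le_SUP[OF u] dv_u
    unfolding Top_pair_def Top_pair_axioms_def K_def D0_def D1_def u_def by auto
  have "c * C \<le> b / 4" using b_large unfolding c_def C_def K_def by (simp add: algebra_simps)
  have c_nonneg: "c \<ge> 0" and C_nonneg: "C \<ge> 0" and \<Delta>_nonneg: "D0 + D1 \<ge> 0"
    unfolding c_def C_def using n \<sigma> d1.K_nonneg D0_nonneg D1_nonneg
    by (auto intro: Top_lipschitz_const_nonneg)
  have small: "c * C / x \<le> 1/4" if "x \<ge> b" for x
    using \<open>c * C \<le> b / 4\<close> that b by (simp add: divide_le_eq)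
  have bound1: "\<And>t. t \<ge> b \<Longrightarrow> \<bar>1 / t\<^sup>2 * Top_inner \<sigma> v1 (dv b v1) t\<bar> \<le> (d1.M / \<sigma>) / t^3"
    by (rule d1.weighted_inner_bound)
  have bound2: "\<And>t. t \<ge> b \<Longrightarrow> \<bar>1 / t\<^sup>2 * Top_inner \<sigma> v2 (dv b v2) t\<bar> \<le> (d1.M / \<sigma>) / t^3"
    by (rule d2.weighted_inner_bound)
  have lipschitz: "\<And>t. t \<ge> b \<Longrightarrow> \<bar>1 / t\<^sup>2 * Top_inner \<sigma> v2 (dv b v2) t - 1 / t\<^sup>2 * Top_inner \<sigma> v1 (dv b v1) t\<bar>
      \<le> C * (D0 + D1) / t^3"
    unfolding C_def by (rule weighted_inner_diff_le)
  note diff = scaled_tail_integral_diff[OF d1.b_pos d1.continuous_on_weighted_inner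
      d2.continuous_on_weighted_inner bound1 bound2 lipschitz, where c=c]
  have T: "Top n \<sigma> b v = (\<lambda>x. c * x * integral {x..} (\<lambda>t. 1 / t\<^sup>2 * Top_inner \<sigma> v (dv b v) t))" for v
    unfolding c_def by (rule Top_eq_scaled_tail_integral)
  have "c1norm b (\<lambda>x. Top n \<sigma> b v2 x - Top n \<sigma> b v1 x) \<le> (D0 + D1) / 8 + 3 * (D0 + D1) / 8"
  proof (rule c1norm_le)
    fix x assume x: "x \<ge> b"
    have "\<bar>Top n \<sigma> b v2 x - Top n \<sigma> b v1 x\<bar> \<le> \<bar>c\<bar> * (C * (D0 + D1)) / (2 * x)"
      unfolding T by (rule diff(1)) (simp_all add: x)
    also have "\<dots> = (c * C / x) * (D0 + D1) / 2" using c_nonneg by simp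
    also have "\<dots> \<le> (1/4) * (D0 + D1) / 2"
      using small[OF x] \<Delta>_nonneg by (intro divide_right_mono mult_right_mono) auto
    finally show "\<bar>Top n \<sigma> b v2 x - Top n \<sigma> b v1 x\<bar> \<le> (D0 + D1) / 8" by simp
    have "\<bar>dv b (\<lambda>x. Top n \<sigma> b v2 x - Top n \<sigma> b v1 x) x\<bar> \<le> \<bar>c\<bar> * (3 * (C * (D0 + D1)) / 2) / x^2"
      unfolding T by (rule diff(2)) (simp_all add: x)
    also have "\<dots> = 3/2 * (c * C / x) * ((D0 + D1) / x)"
      using c_nonneg by (simp add: power2_eq_square)
    also have "\<dots> \<le> 3/2 * (1/4) * (D0 + D1)"
      using small[OF x] \<Delta>_nonneg x b c_nonneg C_nonneg
      by (intro mult_left_mono mult_mono) (auto simp: divide_le_eq mult_le_cancel_left1)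
    finally show "\<bar>dv b (\<lambda>x. Top n \<sigma> b v2 x - Top n \<sigma> b v1 x) x\<bar> \<le> 3 * (D0 + D1) / 8"
      by simp
  qed
  also have "\<dots> = 1/2 * c1norm b (\<lambda>x. v2 x - v1 x)"
    unfolding c1norm_def D0_def[unfolded u_def, symmetric] D1_def[unfolded u_def, symmetric] by (simp add: field_simps)
  finally show ?thesis .
qed

theorem proposition1:
  fixes n :: nat and \<sigma> :: real
  assumes "n \<ge> 2" and "\<sigma> > 0"
  shows "\<exists>b0>0. \<forall>b\<ge>b0.
     (\<forall>v\<in>Yset n \<sigma> b. C1_0 b (Top n \<sigma> b v)) \<and>
     (\<exists>\<tau>. 0 < \<tau> \<and> \<tau> < 1 \<and>
        (\<forall>v1\<in>Yset n \<sigma> b. \<forall>v2\<in>Yset n \<sigma> b.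
           c1norm b (\<lambda>x. Top n \<sigma> b v2 x - Top n \<sigma> b v1 x)
             \<le> \<tau> * c1norm b (\<lambda>x. v2 x - v1 x)))"
proof -
  define b0 where "b0 = max 1 (8 * (real n - 1) * Top_lipschitz_const (4 * (real n - 1) / \<sigma>) \<sigma>)"
  have "C1_0 b (Top n \<sigma> b v)" if "b \<ge> b0" "v \<in> Yset n \<sigma> b" for b v
    using Top_C1_0[OF that(2) assms] that(1) unfolding b0_def by simp
  moreover have "c1norm b (\<lambda>x. Top n \<sigma> b v2 x - Top n \<sigma> b v1 x) \<le> 1/2 * c1norm b (\<lambda>x. v2 x - v1 x)"
    if "b \<ge> b0" "v1 \<in> Yset n \<sigma> b" "v2 \<in> Yset n \<sigma> b" for b v1 v2
    using Top_contraction[OF assms _ _ that(2,3)] that(1) unfolding b0_def by simp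
  moreover have "b0 > 0" unfolding b0_def by simp
  ultimately show ?thesis by (intro exI[of _ b0]) (auto intro!: exI[of _ "1/2"])
qed

end
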